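(* In the setting of the context, there exists a unique solution $\psi$ of the initial value problem \[ \psi'\psi-\frac{\gamma+\delta}{u}\psi=-\delta\,\frac{\beta N-\beta\tilde S e^{(\beta/\gamma)\tilde R}u+\gamma\log u}{u},\quad u\in\bigl(e^{-(\beta/\gamma)\alpha},e^{-(\beta/\gamma)\tilde R}\bigr),\qquad \psi\bigl(e^{-(\beta/\gamma)\tilde R}\bigr)=\beta\tilde I, \] satisfying $\psi(u)>0$ for all $u\in\bigl(e^{-(\beta/\gamma)\alpha},e^{-(\beta/\gamma)\tilde R}\bigr]$.
   Context: Let $\beta,\gamma,\delta>0$ be constants and $\tilde S,\tilde E,\tilde I,\tilde R$ real numbers with $N:=\tilde S+\tilde E+\tilde I+\tilde R>0$. Standing assumptions: (A1) $\tilde I>0$; (A2) $\tilde E>(\gamma/\delta)\tilde I$; (A3) $\tilde S>\delta\tilde E/(\beta\tilde I)$; (A4) $\tilde R\ge 0$ and $N>\tilde S e^{(\beta/\gamma)\tilde R}+\tilde R$. Let $\alpha$ be the unique solution in $(\tilde R,N)$ of $x=N-\tilde S e^{(\beta/\gamma)\tilde R}e^{-(\beta/\gamma)x}$, and assume (A5) $\tilde S<(\gamma/\beta)e^{(\beta/\gamma)(\alpha-\tilde R)}$. *)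

theory Defs
  imports Complex_Main
begin

end

theory Submission
  imports Defs "HOL-Analysis.Analysis"
begin

(*
  Dividing by psi, the equation reads psi' = (gamma + delta) / u - delta F(u) / (u psi) with
  F(u) = beta N - beta S exp ((beta/gamma) R) u + gamma ln u.  F is concave, vanishes at
  a = exp (- (beta/gamma) alpha) by the defining equation of alpha and equals beta (E + I) > 0
  at b = exp (- (beta/gamma) R), so F > 0 on (a, b].

  On [c, b] with a < c, the right-hand side is negative as soon as psi drops below a small level
  e.  Truncating 1/psi at e makes the equation globally Lipschitz; Picard iteration backwards
  from b, a contraction for an exponentially weighted sup norm, solves it, and the sign of psi'
  at level e keeps the solution above e, so it solves the untruncated equation.  A Gronwall
  estimate for the difference of two positive solutions gives uniqueness, and the solutions on
  [c, b] for c tending to a fit together to the unique solution on (a, b].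
*)

section \<open>Backward Picard-Lindeloef on a compact interval\<close>

lemma integral_exp_weighted_bound:
  fixes g :: "real \<Rightarrow> real"
  assumes "v \<le> b" "K > 0" "continuous_on {v..b} g"
    and bound: "\<And>s. s \<in> {v..b} \<Longrightarrow> \<bar>g s\<bar> \<le> C * exp (K * (b - s))"
  shows "\<bar>integral {v..b} g\<bar> \<le> C * exp (K * (b - v)) / K"
proof -
  have "\<bar>g b\<bar> \<le> C"
    using bound[of b] assms(1) by simp
  then have C: "C \<ge> 0"
    by linarith
  have "((\<lambda>s. C * exp (K * (b - s))) has_integral
      (\<lambda>s. - C * exp (K * (b - s)) / K) b - (\<lambda>s. - C * exp (K * (b - s)) / K) v) {v..b}"
    by (rule fundamental_theorem_of_calculus[OF \<open>v \<le> b\<close>])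
      (use \<open>K > 0\<close> in \<open>auto intro!: derivative_eq_intros
         simp: has_real_derivative_iff_has_vector_derivative[symmetric]\<close>)
  then have "((\<lambda>s. C * exp (K * (b - s))) has_integral (C * exp (K * (b - v)) / K - C / K)) {v..b}"
    by (simp add: diff_divide_distrib)
  then have "\<bar>integral {v..b} g\<bar> \<le> C * exp (K * (b - v)) / K - C / K"
    using integral_norm_bound_integral[OF integrable_continuous_interval[OF \<open>continuous_on {v..b} g\<close>]] bound
    by (metis has_integral_integrable integral_unique real_norm_def)
  also have "\<dots> \<le> C * exp (K * (b - v)) / K"
    using C \<open>K > 0\<close> by simp
  finally show ?thesis .
qed

(* The Picard map of y' = f s y, y b = y0, in the unknown z u = y u * exp (- K (b - u)). *)
definition weighted_picard_op ::
    "(real \<Rightarrow> real \<Rightarrow> real) \<Rightarrow> real \<Rightarrow> real \<Rightarrow> real \<Rightarrow> (real \<Rightarrow> real) \<Rightarrow> real \<Rightarrow> real" where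
  "weighted_picard_op f K b y0 z u =
     (y0 - integral {u..b} (\<lambda>s. f s (exp (K * (b - s)) * z s))) / exp (K * (b - u))"

lemma continuous_on_weighted_picard_op:
  assumes cont: "continuous_on ({c..b} \<times> UNIV) (\<lambda>(s, x). f s x)" and "continuous_on {c..b} z"
  shows "continuous_on {c..b} (weighted_picard_op f K b y0 z)"
proof -
  have "continuous_on {c..b} (\<lambda>s. exp (K * (b - s)) * z s)"
    by (intro continuous_intros assms(2))
  then have "continuous_on {c..b} (\<lambda>s. f s (exp (K * (b - s)) * z s))"
    by (rule continuous_on_compose_Pair[OF cont[unfolded Sigma_def[symmetric]] continuous_on_id]) auto
  then have "continuous_on {c..b} (\<lambda>u. integral {u..b} (\<lambda>s. f s (exp (K * (b - s)) * z s)))"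
    by (intro indefinite_integral_continuous_1' integrable_continuous_interval)
  then show ?thesis
    unfolding weighted_picard_op_def by (intro continuous_intros) auto
qed

lemma weighted_picard_op_lipschitz:
  assumes "K > 0" "L \<ge> 0" "v \<le> b"
    and cont: "continuous_on ({v..b} \<times> UNIV) (\<lambda>(s, x). f s x)"
    and lip: "\<And>s x x'. s \<in> {v..b} \<Longrightarrow> \<bar>f s x - f s x'\<bar> \<le> L * \<bar>x - x'\<bar>"
    and "continuous_on {v..b} z1" "continuous_on {v..b} z2"
    and D: "\<And>s. s \<in> {v..b} \<Longrightarrow> \<bar>z1 s - z2 s\<bar> \<le> D"
  shows "\<bar>weighted_picard_op f K b y0 z1 v - weighted_picard_op f K b y0 z2 v\<bar> \<le> L * D / K"
proof -
  let ?g = "\<lambda>z s. f s (exp (K * (b - s)) * z s)"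
  have g_cont: "continuous_on {v..b} (?g z)" if "continuous_on {v..b} z" for z
  proof -
    have "continuous_on {v..b} (\<lambda>s. exp (K * (b - s)) * z s)"
      by (intro continuous_intros that)
    then show ?thesis
      by (rule continuous_on_compose_Pair[OF cont[unfolded Sigma_def[symmetric]] continuous_on_id]) auto
  qed
  have "\<bar>?g z1 s - ?g z2 s\<bar> \<le> L * D * exp (K * (b - s))" if "s \<in> {v..b}" for s
  proof -
    have "\<bar>?g z1 s - ?g z2 s\<bar> \<le> L * \<bar>exp (K * (b - s)) * z1 s - exp (K * (b - s)) * z2 s\<bar>"
      using lip that by auto
    also have "\<dots> = L * (exp (K * (b - s)) * \<bar>z1 s - z2 s\<bar>)"
      by (simp add: abs_mult flip: right_diff_distrib)
    also have "\<dots> \<le> L * (exp (K * (b - s)) * D)"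
      using D[OF that] \<open>L \<ge> 0\<close> by (intro mult_left_mono) auto
    finally show ?thesis
      by (simp add: mult_ac)
  qed
  then have "\<bar>integral {v..b} (\<lambda>s. ?g z1 s - ?g z2 s)\<bar> \<le> L * D * exp (K * (b - v)) / K"
    using \<open>v \<le> b\<close> \<open>K > 0\<close> \<open>continuous_on {v..b} z1\<close> \<open>continuous_on {v..b} z2\<close>
    by (intro integral_exp_weighted_bound continuous_on_diff g_cont)
  then show ?thesis
    using integral_diff[OF integrable_continuous_interval[OF g_cont] integrable_continuous_interval[OF g_cont]]
      \<open>continuous_on {v..b} z1\<close> \<open>continuous_on {v..b} z2\<close> \<open>K > 0\<close>
    by (simp add: weighted_picard_op_def diff_divide_distrib[symmetric] abs_minus_commute divide_le_eq abs_div)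
qed

lemma backward_integral_equation_solvable:
  fixes f :: "real \<Rightarrow> real \<Rightarrow> real"
  assumes "c \<le> b" "L \<ge> 0"
    and cont: "continuous_on ({c..b} \<times> UNIV) (\<lambda>(s, x). f s x)"
    and lip: "\<And>s x x'. s \<in> {c..b} \<Longrightarrow> \<bar>f s x - f s x'\<bar> \<le> L * \<bar>x - x'\<bar>"
  shows "\<exists>y. continuous_on {c..b} y \<and> (\<forall>u\<in>{c..b}. y u = y0 - integral {u..b} (\<lambda>s. f s (y s)))"
proof -
  define K where "K = 2 * L + 1"
  define T where "T z = weighted_picard_op f K b y0 (apply_bcontfun z)" for z
  have clamp: "clamp c b u \<in> {c..b}" "u \<in> {c..b} \<Longrightarrow> clamp c b u = u" for u
    using \<open>c \<le> b\<close> clamp_in_interval[of c b u] clamp_cancel_cbox[of u c b] by (auto simp: cbox_interval)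
  (* Continuous functions on [c, b] become bounded continuous functions on the line via clamp. *)
  define \<Phi> where "\<Phi> z = (SOME g. \<forall>u. apply_bcontfun g u = T z (clamp c b u))" for z
  have \<Phi>: "apply_bcontfun (\<Phi> z) u = T z (clamp c b u)" for z u
  proof -
    have "continuous_on {c..b} (T z)"
      unfolding T_def by (intro continuous_on_weighted_picard_op cont continuous_on_apply_bcontfun)
    then have "\<exists>g. \<forall>u. apply_bcontfun g u = T z (clamp c b u)"
      using continuous_on_cbox_bcontfunE[of c b "T z"] by (metis cbox_interval)
    then show ?thesis
      unfolding \<Phi>_def by (rule someI2_ex) blast
  qed
  have "\<bar>T z1 v - T z2 v\<bar> \<le> dist z1 z2 / 2" if "v \<in> {c..b}" for z1 z2 v
  proof -
    have "\<bar>T z1 v - T z2 v\<bar> \<le> L * dist z1 z2 / K"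
      unfolding T_def using that \<open>L \<ge> 0\<close> dist_bounded[of z1 _ z2]
      by (intro weighted_picard_op_lipschitz continuous_on_subset[OF cont] lip continuous_on_apply_bcontfun)
        (auto simp: K_def dist_real_def)
    also have "\<dots> \<le> dist z1 z2 / 2"
      using \<open>L \<ge> 0\<close> zero_le_dist[of z1 z2] by (simp add: K_def field_simps)
    finally show ?thesis .
  qed
  then have "dist (\<Phi> z1) (\<Phi> z2) \<le> 1/2 * dist z1 z2" for z1 z2
    using clamp(1) by (intro dist_bound) (simp add: \<Phi> dist_real_def)
  then obtain z where z: "\<Phi> z = z"
    using banach_fix_type[of "1/2" \<Phi>] by auto
  have "continuous_on {c..b} (\<lambda>s. exp (K * (b - s)) * z s)"
    by (intro continuous_intros continuous_on_apply_bcontfun)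
  moreover have "exp (K * (b - u)) * z u = y0 - integral {u..b} (\<lambda>s. f s (exp (K * (b - s)) * z s))"
    if "u \<in> {c..b}" for u
    using \<Phi>[of z u] clamp(2)[OF that] by (simp add: z T_def weighted_picard_op_def)
  ultimately show ?thesis
    by blast
qed

lemma backward_picard_lindeloef:
  fixes f :: "real \<Rightarrow> real \<Rightarrow> real"
  assumes "c \<le> b" "L \<ge> 0"
    and cont: "continuous_on ({c..b} \<times> UNIV) (\<lambda>(s, x). f s x)"
    and "\<And>s x x'. s \<in> {c..b} \<Longrightarrow> \<bar>f s x - f s x'\<bar> \<le> L * \<bar>x - x'\<bar>"
  shows "\<exists>y. y b = y0 \<and> (\<forall>u\<in>{c..b}. (y has_real_derivative f u (y u)) (at u within {c..b}))"
proof -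
  obtain y where y_cont: "continuous_on {c..b} y"
    and y_eq: "\<And>u. u \<in> {c..b} \<Longrightarrow> y u = y0 - integral {u..b} (\<lambda>s. f s (y s))"
    using backward_integral_equation_solvable[OF assms] by blast
  have f_cont: "continuous_on {c..b} (\<lambda>s. f s (y s))"
    by (rule continuous_on_compose_Pair[OF cont[unfolded Sigma_def[symmetric]] continuous_on_id y_cont]) auto
  have "(y has_real_derivative f u (y u)) (at u within {c..b})" if u: "u \<in> {c..b}" for u
  proof (rule has_field_derivative_transform_within)
    show "((\<lambda>u. y0 - integral {u..b} (\<lambda>s. f s (y s))) has_real_derivative f u (y u)) (at u within {c..b})"
      using integral_has_real_derivative'[OF f_cont u] by (auto intro!: derivative_eq_intros)
  qed (use u y_eq in \<open>auto intro: zero_less_one\<close>)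
  moreover have "y b = y0"
    using y_eq[of b] \<open>c \<le> b\<close> by simp
  ultimately show ?thesis
    by blast
qed

section \<open>Positive solutions of y' = g u - h u / y\<close>

lemma linear_ode_backward_vanishes:
  fixes D q :: "real \<Rightarrow> real"
  assumes "u \<le> b" "continuous_on {u..b} D" "D b = 0"
    and deriv: "\<And>x. x \<in> {u<..<b} \<Longrightarrow> (D has_real_derivative q x * D x) (at x)"
    and bound: "\<And>x. x \<in> {u<..<b} \<Longrightarrow> \<bar>q x\<bar> \<le> L"
  shows "D u = 0"
proof -
  define h where "h x = (D x)\<^sup>2 * exp (2 * L * x)" for x
  have "h u \<le> h b"
  proof (rule DERIV_nonneg_imp_increasing_open[OF \<open>u \<le> b\<close>])
    fix x assume x: "u < x" "x < b"
    have "(h has_real_derivative 2 * (D x)\<^sup>2 * exp (2 * L * x) * (q x + L)) (at x)"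
      unfolding h_def using x
      by (auto intro!: derivative_eq_intros deriv simp: algebra_simps power2_eq_square)
    moreover have "q x + L \<ge> 0"
      using bound[of x] x by auto
    ultimately show "\<exists>y. (h has_real_derivative y) (at x) \<and> y \<ge> 0"
      by (intro exI[of _ "2 * (D x)\<^sup>2 * exp (2 * L * x) * (q x + L)"]) auto
  next
    show "continuous_on {u..b} h"
      unfolding h_def by (intro continuous_intros assms)
  qed
  then have "(D u)\<^sup>2 * exp (2 * L * u) \<le> 0"
    using \<open>D b = 0\<close> by (simp add: h_def)
  then show ?thesis
    by (simp add: mult_le_0_iff)
qed

lemma above_threshold_backward:
  fixes y y' :: "real \<Rightarrow> real"
  assumes "continuous_on {c..b} y" "y b > e"
    and deriv: "\<And>u. u \<in> {c..b} \<Longrightarrow> (y has_real_derivative y' u) (at u within {c..b})"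
    and descent: "\<And>u. u \<in> {c..b} \<Longrightarrow> y u \<le> e \<Longrightarrow> y' u < 0"
  shows "\<forall>u\<in>{c..b}. y u > e"
proof (rule ccontr)
  define S where "S = {c..b} \<inter> y -` {..e}"
  assume "\<not> (\<forall>u\<in>{c..b}. y u > e)"
  then have "S \<noteq> {}"
    by (auto simp: S_def not_less)
  moreover have S_bdd: "bdd_above S"
    unfolding S_def by (auto intro: bdd_aboveI[of _ b])
  moreover have "closed S"
    unfolding S_def by (intro continuous_closed_preimage assms) auto
  ultimately have "Sup S \<in> S"
    by (rule closed_contains_Sup)
  then have u0: "Sup S \<in> {c..<b}" "y (Sup S) \<le> e"
    using \<open>y b > e\<close> by (auto simp: S_def order.order_iff_strict)
  obtain d where "d > 0" and d: "\<And>h. h > 0 \<Longrightarrow> Sup S + h \<in> {c..b} \<Longrightarrow> h < d \<Longrightarrow> y (Sup S + h) < y (Sup S)"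
    using has_real_derivative_neg_dec_right[OF deriv descent] u0 by (metis atLeastLessThan_iff atLeastAtMost_iff less_imp_le)
  define h where "h = min (d / 2) (b - Sup S)"
  have h: "h > 0" "Sup S + h \<in> {c..b}" "h < d"
    using \<open>d > 0\<close> u0 by (auto simp: h_def)
  then have "Sup S + h \<in> S"
    using d[OF h] u0 by (auto simp: S_def)
  then have "Sup S + h \<le> Sup S"
    by (rule cSup_upper[OF _ S_bdd])
  then show False
    using h by simp
qed

definition positive_solution ::
    "real set \<Rightarrow> (real \<Rightarrow> real) \<Rightarrow> (real \<Rightarrow> real) \<Rightarrow> real \<Rightarrow> real \<Rightarrow> (real \<Rightarrow> real) \<Rightarrow> bool" where
  "positive_solution S g h b y0 \<phi> \<longleftrightarrow> continuous_on S \<phi> \<and>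
     (\<forall>u\<in>interior S. (\<phi> has_real_derivative g u - h u / \<phi> u) (at u)) \<and>
     \<phi> b = y0 \<and> (\<forall>u\<in>S. \<phi> u > 0)"

lemma positive_solution_subset:
  assumes "positive_solution S g h b y0 \<phi>" "T \<subseteq> S" "b \<in> T"
  shows "positive_solution T g h b y0 \<phi>"
  using assms interior_mono[OF \<open>T \<subseteq> S\<close>]
  unfolding positive_solution_def by (auto intro: continuous_on_subset)

lemma continuous_on_Icc_abs_bounded:
  fixes f :: "real \<Rightarrow> real"
  assumes "continuous_on {c..b} f"
  obtains M where "M \<ge> 0" "\<And>u. u \<in> {c..b} \<Longrightarrow> \<bar>f u\<bar> \<le> M"
proof -
  have "bounded (f ` {c..b})"
    using assms by (intro compact_imp_bounded compact_continuous_image) auto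
  then obtain M where "\<forall>u\<in>{c..b}. \<bar>f u\<bar> \<le> M"
    unfolding bounded_real by blast
  then show thesis
    using that[of "\<bar>M\<bar>"] by force
qed

lemma positive_solution_unique:
  assumes "{c..b} \<subseteq> S" "{c..b} \<subseteq> T" "continuous_on {c..b} h"
    and "positive_solution S g h b y0 \<phi>1" "positive_solution T g h b y0 \<phi>2"
    and "u \<in> {c..b}"
  shows "\<phi>1 u = \<phi>2 u"
proof -
  have "b \<in> {c..b}"
    using \<open>u \<in> {c..b}\<close> by simp
  then have \<phi>1: "positive_solution {c..b} g h b y0 \<phi>1" and \<phi>2: "positive_solution {c..b} g h b y0 \<phi>2"
    using assms by (auto intro: positive_solution_subset)
  define q where "q x = h x / (\<phi>1 x * \<phi>2 x)" for x
  have "continuous_on {c..b} q"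
    using \<open>continuous_on {c..b} h\<close> \<phi>1 \<phi>2 unfolding q_def positive_solution_def
    by (intro continuous_intros) auto
  then obtain L where L: "\<And>x. x \<in> {c..b} \<Longrightarrow> \<bar>q x\<bar> \<le> L"
    using continuous_on_Icc_abs_bounded by metis
  have "\<phi>1 u - \<phi>2 u = 0"
  proof (rule linear_ode_backward_vanishes[where D = "\<lambda>x. \<phi>1 x - \<phi>2 x" and q = q and L = L])
    fix x assume x: "x \<in> {u<..<b}"
    then have "x \<in> {c<..<b}"
      using \<open>u \<in> {c..b}\<close> by auto
    then have "(\<phi>1 has_real_derivative g x - h x / \<phi>1 x) (at x)" "\<phi>1 x > 0"
      and "(\<phi>2 has_real_derivative g x - h x / \<phi>2 x) (at x)" "\<phi>2 x > 0"
      using \<phi>1 \<phi>2 unfolding positive_solution_def by auto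
    then have "((\<lambda>x. \<phi>1 x - \<phi>2 x) has_real_derivative (g x - h x / \<phi>1 x) - (g x - h x / \<phi>2 x)) (at x)"
      by (intro DERIV_diff)
    then show "((\<lambda>x. \<phi>1 x - \<phi>2 x) has_real_derivative q x * (\<phi>1 x - \<phi>2 x)) (at x)"
      using \<open>\<phi>1 x > 0\<close> \<open>\<phi>2 x > 0\<close> by (simp add: q_def field_simps)
    show "\<bar>q x\<bar> \<le> L"
      using L x \<open>u \<in> {c..b}\<close> by auto
  qed (use \<phi>1 \<phi>2 \<open>u \<in> {c..b}\<close> in \<open>auto simp: positive_solution_def intro: continuous_on_diff continuous_on_subset\<close>)
  then show ?thesis
    by simp
qed

lemma exists_level_below_ratio:
  fixes g h :: "real \<Rightarrow> real"
  assumes "c \<le> b" "continuous_on {c..b} g" "continuous_on {c..b} h"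
    and h_pos: "\<And>u. u \<in> {c..b} \<Longrightarrow> h u > 0" and "y0 > 0"
  obtains e where "0 < e" "e < y0" "\<And>u. u \<in> {c..b} \<Longrightarrow> e * g u < h u"
proof -
  obtain m where "m \<in> {c..b}" and m: "\<And>u. u \<in> {c..b} \<Longrightarrow> h m \<le> h u"
    using continuous_attains_inf[OF _ _ \<open>continuous_on {c..b} h\<close>] \<open>c \<le> b\<close> by auto
  then have "h m > 0"
    using h_pos by blast
  obtain M where "M \<ge> 0" and M: "\<And>u. u \<in> {c..b} \<Longrightarrow> \<bar>g u\<bar> \<le> M"
    using continuous_on_Icc_abs_bounded[OF \<open>continuous_on {c..b} g\<close>] by blast
  define e where "e = min (y0 / 2) (h m / (M + 1))"
  have "e > 0"
    using \<open>h m > 0\<close> \<open>M \<ge> 0\<close> \<open>y0 > 0\<close> by (simp add: e_def)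
  have "e * g u < h u" if "u \<in> {c..b}" for u
  proof -
    have "e * g u \<le> e * M"
      using M[OF that] \<open>e > 0\<close> by (intro mult_left_mono) auto
    also have "\<dots> \<le> h m / (M + 1) * M"
      using \<open>M \<ge> 0\<close> by (intro mult_right_mono) (auto simp: e_def)
    also have "\<dots> < h m"
      using \<open>M \<ge> 0\<close> \<open>h m > 0\<close> by (simp add: field_simps)
    finally show ?thesis
      using m[OF that] by simp
  qed
  then show thesis
    using that[of e] \<open>e > 0\<close> \<open>y0 > 0\<close> by (auto simp: e_def)
qed

lemma inverse_max_lipschitz:
  fixes x x' e :: real
  assumes "e > 0"
  shows "\<bar>1 / max x e - 1 / max x' e\<bar> \<le> \<bar>x - x'\<bar> / e\<^sup>2"
proof -
  have "\<bar>1 / max x e - 1 / max x' e\<bar> = \<bar>max x e - max x' e\<bar> / (max x e * max x' e)"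
    using assms by (simp add: field_simps abs_div abs_minus_commute)
  also have "\<dots> \<le> \<bar>max x e - max x' e\<bar> / e\<^sup>2"
    using assms by (intro divide_left_mono) (auto simp: power2_eq_square intro: mult_mono)
  also have "\<dots> \<le> \<bar>x - x'\<bar> / e\<^sup>2"
    using assms by (intro divide_right_mono) auto
  finally show ?thesis .
qed

lemma truncated_equation_solvable:
  assumes "c \<le> b" "e > 0" and g: "continuous_on {c..b} g" and h: "continuous_on {c..b} h"
  shows "\<exists>y. y b = y0 \<and>
    (\<forall>u\<in>{c..b}. (y has_real_derivative g u - h u / max (y u) e) (at u within {c..b}))"
proof -
  obtain M where "M \<ge> 0" and M: "\<And>u. u \<in> {c..b} \<Longrightarrow> \<bar>h u\<bar> \<le> M"
    using continuous_on_Icc_abs_bounded[OF h] by blast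
  define f where "f s x = g s - h s / max x e" for s x
  have "continuous_on ({c..b} \<times> UNIV) (\<lambda>p. g (fst p) - h (fst p) / max (snd p) e)"
    using \<open>e > 0\<close> by (intro continuous_intros continuous_on_compose2[OF g] continuous_on_compose2[OF h]) auto
  then have f_cont: "continuous_on ({c..b} \<times> UNIV) (\<lambda>(s, x). f s x)"
    by (simp add: f_def case_prod_beta')
  have f_lip: "\<bar>f s x - f s x'\<bar> \<le> M / e\<^sup>2 * \<bar>x - x'\<bar>" if "s \<in> {c..b}" for s x x'
  proof -
    have "f s x - f s x' = h s * (1 / max x' e - 1 / max x e)"
      by (simp add: f_def right_diff_distrib)
    then have "\<bar>f s x - f s x'\<bar> = \<bar>h s\<bar> * \<bar>1 / max x' e - 1 / max x e\<bar>"
      by (simp add: abs_mult)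
    also have "\<dots> \<le> M * (\<bar>x - x'\<bar> / e\<^sup>2)"
      using M[OF that] inverse_max_lipschitz[OF \<open>e > 0\<close>, of x' x]
      by (intro mult_mono) (auto simp: abs_minus_commute)
    finally show ?thesis
      by simp
  qed
  show ?thesis
    using backward_picard_lindeloef[OF \<open>c \<le> b\<close> _ f_cont f_lip, of y0] \<open>M \<ge> 0\<close> by (auto simp: f_def)
qed

lemma positive_solution_exists:
  assumes "c \<le> b" and g: "continuous_on {c..b} g" and h: "continuous_on {c..b} h"
    and h_pos: "\<And>u. u \<in> {c..b} \<Longrightarrow> h u > 0" and "y0 > 0"
  shows "\<exists>\<phi>. positive_solution {c..b} g h b y0 \<phi>"
proof -
  obtain e where e: "0 < e" "e < y0" and e_below: "\<And>u. u \<in> {c..b} \<Longrightarrow> e * g u < h u"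
    using exists_level_below_ratio[OF assms] by blast
  obtain y where "y b = y0"
    and y_deriv: "\<And>u. u \<in> {c..b} \<Longrightarrow> (y has_real_derivative g u - h u / max (y u) e) (at u within {c..b})"
    using truncated_equation_solvable[OF \<open>c \<le> b\<close> \<open>e > 0\<close> g h, of y0] by blast
  have y_cont: "continuous_on {c..b} y"
    using y_deriv DERIV_continuous continuous_on_eq_continuous_within by blast
  have y_above: "\<And>u. u \<in> {c..b} \<Longrightarrow> y u > e"
  proof (rule above_threshold_backward[OF y_cont _ y_deriv, rule_format])
    show "g u - h u / max (y u) e < 0" if "u \<in> {c..b}" "y u \<le> e" for u
      using e_below[OF that(1)] e h_pos[OF that(1)] that(2) by (simp add: max_def field_simps)
  qed (use \<open>y b = y0\<close> e in auto)
  have "positive_solution {c..b} g h b y0 y"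
    unfolding positive_solution_def
  proof (intro conjI ballI)
    fix u assume u: "u \<in> interior {c..b}"
    then have "u \<in> {c..b}"
      using interior_subset by blast
    then show "(y has_real_derivative g u - h u / y u) (at u)"
      using y_deriv[OF \<open>u \<in> {c..b}\<close>] y_above at_within_interior[OF u] by (simp add: max_absorb1 less_imp_le)
  qed (use y_cont \<open>y b = y0\<close> y_above e in \<open>auto intro: less_trans\<close>)
  then show ?thesis
    by blast
qed

lemma continuous_on_Ioc_from_Icc:
  fixes a b :: real
  assumes "\<And>c. a < c \<Longrightarrow> c < b \<Longrightarrow> continuous_on {c..b} f"
  shows "continuous_on {a<..b} f"
proof -
  have "continuous (at u within {a<..b}) f" if u: "u \<in> {a<..b}" for u
  proof -
    define c where "c = (a + u) / 2"
    have c: "a < c" "c < u" "c < b"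
      using u by (auto simp: c_def)
    moreover have "u \<in> {c..b}"
      using c u by simp
    ultimately have "continuous (at u within {c..b}) f"
      using assms[of c] continuous_on_eq_continuous_within by blast
    moreover have "at u within {a<..b} = at u within {c..b}"
      by (rule at_within_nhd[of u "{c<..}"]) (use c in auto)
    ultimately show ?thesis
      by simp
  qed
  then show ?thesis
    by (simp add: continuous_on_eq_continuous_within)
qed

lemma positive_solution_glue:
  assumes "a < b"
    and sol: "\<And>c. c \<in> {a<..<b} \<Longrightarrow> positive_solution {c..b} g h b y0 (\<Phi> c)"
    and agree: "\<And>c u. c \<in> {a<..<b} \<Longrightarrow> u \<in> {c..b} \<Longrightarrow> \<psi> u = \<Phi> c u"
  shows "positive_solution {a<..b} g h b y0 \<psi>"
  unfolding positive_solution_def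
proof (intro conjI ballI)
  show "continuous_on {a<..b} \<psi>"
  proof (rule continuous_on_Ioc_from_Icc)
    fix c assume "a < c" "c < b"
    then have "continuous_on {c..b} (\<Phi> c)"
      using sol by (simp add: positive_solution_def)
    then show "continuous_on {c..b} \<psi>"
      by (rule continuous_on_eq) (simp add: agree[of c] \<open>a < c\<close> \<open>c < b\<close>)
  qed
  fix u assume "u \<in> interior {a<..b}"
  then have u: "u \<in> {a<..<b}"
    by simp
  define c where "c = (a + u) / 2"
  have c: "c \<in> {a<..<b}" "c < u"
    using u by (auto simp: c_def)
  have "(\<Phi> c has_real_derivative g u - h u / \<Phi> c u) (at u)"
    using sol[OF c(1)] u c by (simp add: positive_solution_def)
  moreover have "\<Phi> c u = \<psi> u"
    using agree[OF c(1), of u] u c by simp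
  ultimately have "(\<Phi> c has_real_derivative g u - h u / \<psi> u) (at u)"
    by simp
  then show "(\<psi> has_real_derivative g u - h u / \<psi> u) (at u)"
    by (rule has_field_derivative_transform_within_open[where S = "{c<..<b}"])
      (use u c agree[OF c(1)] in auto)
next
  have c: "(a + b) / 2 \<in> {a<..<b}"
    using \<open>a < b\<close> by simp
  show "\<psi> b = y0"
    using sol[OF c] agree[OF c, of b] \<open>a < b\<close> by (simp add: positive_solution_def)
next
  fix u assume u: "u \<in> {a<..b}"
  then have c: "(a + u) / 2 \<in> {a<..<b}"
    by simp
  show "\<psi> u > 0"
    using sol[OF c] agree[OF c, of u] u by (simp add: positive_solution_def)
qed

lemma positive_solution_exists_unique:
  assumes "a < b" "continuous_on {a<..b} g" "continuous_on {a<..b} h"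
    and "\<And>u. u \<in> {a<..b} \<Longrightarrow> h u > 0" "y0 > 0"
  shows "\<exists>\<psi>. positive_solution {a<..b} g h b y0 \<psi> \<and>
    (\<forall>\<phi>. positive_solution {a<..b} g h b y0 \<phi> \<longrightarrow> (\<forall>u\<in>{a<..b}. \<phi> u = \<psi> u))"
proof -
  have h_cont: "continuous_on {c..b} h" if "a < c" for c
    by (rule continuous_on_subset[OF assms(3)]) (use that in auto)
  have "\<exists>\<phi>. positive_solution {c..b} g h b y0 \<phi>" if "c \<in> {a<..<b}" for c
    using that assms by (intro positive_solution_exists) (auto intro: continuous_on_subset)
  then obtain \<Phi> where \<Phi>: "\<And>c. c \<in> {a<..<b} \<Longrightarrow> positive_solution {c..b} g h b y0 (\<Phi> c)"
    by metis
  define \<psi> where "\<psi> u = \<Phi> ((a + u) / 2) u" for u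
  have "\<psi> u = \<Phi> c u" if c: "c \<in> {a<..<b}" and u: "u \<in> {c..b}" for c u
    unfolding \<psi>_def using c u
    by (intro positive_solution_unique[where c = "max c ((a + u) / 2)", OF _ _ h_cont \<Phi> \<Phi>]) auto
  then have "positive_solution {a<..b} g h b y0 \<psi>"
    using positive_solution_glue[OF \<open>a < b\<close> \<Phi>] by blast
  moreover have "\<phi> u = \<psi> u" if "positive_solution {a<..b} g h b y0 \<phi>" "u \<in> {a<..b}" for \<phi> u
    using that by (intro positive_solution_unique[where c = u, OF _ _ h_cont that(1) calculation]) auto
  ultimately show ?thesis
    by blast
qed

lemma positive_solution_Ioc_iff:
  "positive_solution {a<..b} g (\<lambda>u. - r u) b y0 \<phi> \<longleftrightarrow>
    continuous_on {a<..b} \<phi> \<and>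
    (\<forall>u\<in>{a<..<b}. \<exists>d. (\<phi> has_real_derivative d) (at u) \<and> d * \<phi> u - g u * \<phi> u = r u) \<and>
    \<phi> b = y0 \<and> (\<forall>u\<in>{a<..b}. \<phi> u > 0)"
proof -
  have "(\<exists>d. (\<phi> has_real_derivative d) (at u) \<and> d * \<phi> u - g u * \<phi> u = r u) \<longleftrightarrow>
      (\<phi> has_real_derivative g u - - r u / \<phi> u) (at u)" if "\<phi> u > 0" for u
  proof -
    have "d * \<phi> u - g u * \<phi> u = r u \<longleftrightarrow> d = g u - - r u / \<phi> u" for d
      using that by (auto simp: field_simps)
    then show ?thesis
      by auto
  qed
  then show ?thesis
    unfolding positive_solution_def interior_lessThanAtMost by fastforce
qed

lemma abel_equation_exists_unique:
  assumes "a < b" "continuous_on {a<..b} g" "continuous_on {a<..b} r"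
    and "\<And>u. u \<in> {a<..b} \<Longrightarrow> r u < 0" "y0 > 0"
  shows "\<exists>\<psi>. (continuous_on {a<..b} \<psi> \<and>
      (\<forall>u\<in>{a<..<b}. \<exists>d. (\<psi> has_real_derivative d) (at u) \<and> d * \<psi> u - g u * \<psi> u = r u) \<and>
      \<psi> b = y0 \<and> (\<forall>u\<in>{a<..b}. \<psi> u > 0)) \<and>
    (\<forall>\<phi>. (continuous_on {a<..b} \<phi> \<and>
      (\<forall>u\<in>{a<..<b}. \<exists>d. (\<phi> has_real_derivative d) (at u) \<and> d * \<phi> u - g u * \<phi> u = r u) \<and>
      \<phi> b = y0 \<and> (\<forall>u\<in>{a<..b}. \<phi> u > 0)) \<longrightarrow> (\<forall>u\<in>{a<..b}. \<phi> u = \<psi> u))"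
proof -
  have "\<exists>\<psi>. positive_solution {a<..b} g (\<lambda>u. - r u) b y0 \<psi> \<and>
    (\<forall>\<phi>. positive_solution {a<..b} g (\<lambda>u. - r u) b y0 \<phi> \<longrightarrow> (\<forall>u\<in>{a<..b}. \<phi> u = \<psi> u))"
    using assms by (intro positive_solution_exists_unique continuous_intros) auto
  then show ?thesis
    unfolding positive_solution_Ioc_iff .
qed

section \<open>The equation of the SEIR model\<close>

lemma affine_plus_ln_pos:
  fixes a b u c0 c1 \<gamma> :: real
  assumes "0 < a" "u \<in> {a<..b}" "\<gamma> \<ge> 0"
    and "c0 + c1 * a + \<gamma> * ln a \<ge> 0" "c0 + c1 * b + \<gamma> * ln b > 0"
  shows "c0 + c1 * u + \<gamma> * ln u > 0"
proof -
  define t where "t = (u - a) / (b - a)"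
  have "a < b"
    using assms(2) by simp
  then have t: "0 < t" "t \<le> 1"
    using assms(2) by (auto simp: t_def divide_le_eq_1)
  have "t * (b - a) = u - a"
    using \<open>a < b\<close> by (simp add: t_def)
  then have u: "u = (1 - t) * a + t * b"
    by (auto simp: left_diff_distrib right_diff_distrib)
  have "(1 - t) * ln a + t * ln b \<le> ln u"
    using concave_onD[OF ln_concave, of t a b] t u assms(1,2) by simp
  then have "(1 - t) * (c0 + c1 * a + \<gamma> * ln a) + t * (c0 + c1 * b + \<gamma> * ln b) \<le> c0 + c1 * u + \<gamma> * ln u"
    using mult_left_mono[OF _ \<open>\<gamma> \<ge> 0\<close>] u by (fastforce simp: algebra_simps)
  moreover have "(1 - t) * (c0 + c1 * a + \<gamma> * ln a) + t * (c0 + c1 * b + \<gamma> * ln b) > 0"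
    using t assms(4,5) mult_pos_pos[of t "c0 + c1 * b + \<gamma> * ln b"]
      mult_nonneg_nonneg[of "1 - t" "c0 + c1 * a + \<gamma> * ln a"] by linarith
  ultimately show ?thesis
    by linarith
qed

lemma forcing_term_pos:
  fixes \<beta> \<gamma> S E I R N \<alpha> u :: real
  assumes "\<beta> > 0" "\<gamma> > 0" "N = S + E + I + R" "E + I > 0"
    and alpha_eq: "\<alpha> = N - S * exp ((\<beta> / \<gamma>) * R) * exp (- (\<beta> / \<gamma>) * \<alpha>)"
    and u: "u \<in> {exp (- (\<beta> / \<gamma>) * \<alpha>)<..exp (- (\<beta> / \<gamma>) * R)}"
  shows "\<beta> * N - \<beta> * S * exp ((\<beta> / \<gamma>) * R) * u + \<gamma> * ln u > 0"
proof -
  define a where "a = exp (- (\<beta> / \<gamma>) * \<alpha>)"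
  define b where "b = exp (- (\<beta> / \<gamma>) * R)"
  define F where "F u = \<beta> * N + (- \<beta> * S * exp ((\<beta> / \<gamma>) * R)) * u + \<gamma> * ln u" for u
  have F_eq: "F u = \<beta> * N - \<beta> * (S * exp ((\<beta> / \<gamma>) * R) * u) + \<gamma> * ln u" for u
    unfolding F_def by (simp only: mult.assoc mult_minus_left diff_conv_add_uminus)
  have "S * exp ((\<beta> / \<gamma>) * R) * a = N - \<alpha>" "\<gamma> * ln a = - \<beta> * \<alpha>"
    using alpha_eq \<open>\<gamma> > 0\<close> by (simp_all add: a_def)
  then have "F a = 0"
    by (simp add: F_eq right_diff_distrib)
  have "S * exp ((\<beta> / \<gamma>) * R) * b = S" "\<gamma> * ln b = - \<beta> * R"
    using \<open>\<gamma> > 0\<close> by (simp_all add: b_def mult.assoc flip: exp_add)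
  then have "F b = \<beta> * (E + I)"
    unfolding F_eq by (simp only:) (simp add: \<open>N = S + E + I + R\<close> algebra_simps)
  then have "F b > 0"
    using \<open>\<beta> > 0\<close> \<open>E + I > 0\<close> by simp
  have "0 < a" "u \<in> {a<..b}"
    using u by (simp_all add: a_def b_def)
  with \<open>F a = 0\<close> \<open>F b > 0\<close> have "F u > 0"
    unfolding F_def using \<open>\<gamma> > 0\<close> by (intro affine_plus_ln_pos[of a u b \<gamma>]) simp_all
  then show ?thesis
    by (simp add: F_def)
qed

theorem lemma8:
  fixes \<beta> \<gamma> \<delta> S E I R N \<alpha> :: real
  assumes pos: "\<beta> > 0" "\<gamma> > 0" "\<delta> > 0"
    and N_def: "N = S + E + I + R" and N_pos: "N > 0"
    and A1: "I > 0"
    and A2: "E > (\<gamma> / \<delta>) * I"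
    and A3: "S > \<delta> * E / (\<beta> * I)"
    and A4: "R \<ge> 0" "N > S * exp ((\<beta> / \<gamma>) * R) + R"
    and alpha_in: "R < \<alpha>" "\<alpha> < N"
    and alpha_eq: "\<alpha> = N - S * exp ((\<beta> / \<gamma>) * R) * exp (- (\<beta> / \<gamma>) * \<alpha>)"
    and A5: "S < (\<gamma> / \<beta>) * exp ((\<beta> / \<gamma>) * (\<alpha> - R))"
  shows "\<exists>\<psi> :: real \<Rightarrow> real.
     (continuous_on {exp (- (\<beta> / \<gamma>) * \<alpha>)<..exp (- (\<beta> / \<gamma>) * R)} \<psi>
      \<and> (\<forall>u \<in> {exp (- (\<beta> / \<gamma>) * \<alpha>)<..<exp (- (\<beta> / \<gamma>) * R)}.
           \<exists>d. (\<psi> has_real_derivative d) (at u) \<and>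
               d * \<psi> u - ((\<gamma> + \<delta>) / u) * \<psi> u
                 = - \<delta> * ((\<beta> * N - \<beta> * S * exp ((\<beta> / \<gamma>) * R) * u + \<gamma> * ln u) / u))
      \<and> \<psi> (exp (- (\<beta> / \<gamma>) * R)) = \<beta> * I
      \<and> (\<forall>u \<in> {exp (- (\<beta> / \<gamma>) * \<alpha>)<..exp (- (\<beta> / \<gamma>) * R)}. \<psi> u > 0))
   \<and> (\<forall>\<phi> :: real \<Rightarrow> real.
       (continuous_on {exp (- (\<beta> / \<gamma>) * \<alpha>)<..exp (- (\<beta> / \<gamma>) * R)} \<phi>
        \<and> (\<forall>u \<in> {exp (- (\<beta> / \<gamma>) * \<alpha>)<..<exp (- (\<beta> / \<gamma>) * R)}.
             \<exists>d. (\<phi> has_real_derivative d) (at u) \<and>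
                 d * \<phi> u - ((\<gamma> + \<delta>) / u) * \<phi> u
                   = - \<delta> * ((\<beta> * N - \<beta> * S * exp ((\<beta> / \<gamma>) * R) * u + \<gamma> * ln u) / u))
        \<and> \<phi> (exp (- (\<beta> / \<gamma>) * R)) = \<beta> * I
        \<and> (\<forall>u \<in> {exp (- (\<beta> / \<gamma>) * \<alpha>)<..exp (- (\<beta> / \<gamma>) * R)}. \<phi> u > 0))
       \<longrightarrow> (\<forall>u \<in> {exp (- (\<beta> / \<gamma>) * \<alpha>)<..exp (- (\<beta> / \<gamma>) * R)}. \<phi> u = \<psi> u))"
proof -
  define a where "a = exp (- (\<beta> / \<gamma>) * \<alpha>)"
  define b where "b = exp (- (\<beta> / \<gamma>) * R)"
  have "(\<beta> / \<gamma>) * R < (\<beta> / \<gamma>) * \<alpha>"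
    using pos alpha_in by (intro mult_strict_left_mono) auto
  then have "0 < a" "a < b"
    by (simp_all add: a_def b_def)
  have "E + I > 0"
    using A1 A2 pos by (smt (verit) divide_pos_pos mult_pos_pos)
  show ?thesis
    unfolding a_def[symmetric] b_def[symmetric]
  proof (rule abel_equation_exists_unique[OF \<open>a < b\<close>])
    show "continuous_on {a<..b} (\<lambda>u. (\<gamma> + \<delta>) / u)"
      using \<open>0 < a\<close> by (intro continuous_intros) auto
    show "continuous_on {a<..b} (\<lambda>u. - \<delta> * ((\<beta> * N - \<beta> * S * exp ((\<beta> / \<gamma>) * R) * u + \<gamma> * ln u) / u))"
      using \<open>0 < a\<close> by (intro continuous_intros) auto
    show "- \<delta> * ((\<beta> * N - \<beta> * S * exp ((\<beta> / \<gamma>) * R) * u + \<gamma> * ln u) / u) < 0"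
      if u: "u \<in> {a<..b}" for u
    proof -
      have "u > 0"
        using u \<open>0 < a\<close> by simp
      moreover have "\<beta> * N - \<beta> * S * exp ((\<beta> / \<gamma>) * R) * u + \<gamma> * ln u > 0"
        using forcing_term_pos[OF pos(1,2) N_def \<open>E + I > 0\<close> alpha_eq, of u] u by (simp add: a_def b_def)
      ultimately show ?thesis
        using pos(3) by (intro mult_neg_pos divide_pos_pos) auto
    qed
  qed (use pos A1 in simp)
qed

end
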